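(* Let $E$ be a locally complete complex lcHs, $G\subset E'$ a linear subspace that determines boundedness, $\nu\colon\mathbb{D}\to(0,\infty)$ continuous, and $U_*\subset\mathbb{D}$ a set having an accumulation point in $\mathbb{D}$. Let $f\colon\{0\}\cup(\{1\}\times U_* )\to E$ be a function such that for each $e'\in G$ there is $f_{e'}\in\mathcal{B}\nu(\mathbb{D})$ with $f_{e'}(0)=e'(f(0))$ and $f_{e'}'(z)=e'(f(1,z))$ for all $z\in U_*$. Then there exists a unique $F\in\mathcal{B}\nu(\mathbb{D},E)$ with $F(0)=f(0)$ and $(\partial^1_{\mathbb{C}})^EF(z)=f(1,z)$ for all $z\in U_*$.
   Context: $\mathbb{D}$ is the open unit disc in $\mathbb{C}$; "lcHs" means locally convex Hausdorff space over $\mathbb{C}$ with directed fundamental system of seminorms $(p_\alpha)_{\alpha\in\mathfrak{A}}$. $E$ is locally complete if for every closed bounded absolutely convex $D\subset E$ the space $\bigcup_n nD$ normed by the gauge of $D$ is Banach. $G\subset E'$ determines boundedness if every $\sigma(E,G)$-bounded subset of $E$ is bounded in $E$. $\mathcal{O}(\mathbb{D},E)$ is the space of holomorphic $E$-valued functions, with complex derivative $(\partial^1_{\mathbb{C}})^Ef(z):=\lim_{h\to0,h\in\mathbb{C}\setminus\{0\}}(f(z+h)-f(z))/h$. The Bloch type space is $\mathcal{B}\nu(\mathbb{D},E):=\{f\in\mathcal{O}(\mathbb{D},E):|f|_{\nu,\alpha}:=\max(p_\alpha(f(0)),\sup_{z\in\mathbb{D}}p_\alpha((\partial^1_{\mathbb{C}})^Ef(z))\nu(z))<\infty\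 \forall\alpha\}$; $\mathcal{B}\nu(\mathbb{D}):=\mathcal{B}\nu(\mathbb{D},\mathbb{C})$, and $f'$ denotes the derivative of a scalar holomorphic function. *)

theory Defs
  imports "HOL-Analysis.Analysis"
begin

class cvec = ab_group_add +
  fixes scaleC :: "complex \<Rightarrow> 'a \<Rightarrow> 'a" (infixr \<open>*\<^sub>C\<close> 75)
  assumes scaleC_add_right: "a *\<^sub>C (x + y) = a *\<^sub>C x + a *\<^sub>C y"
    and scaleC_add_left: "(a + b) *\<^sub>C x = a *\<^sub>C x + b *\<^sub>C x"
    and scaleC_scaleC: "a *\<^sub>C (b *\<^sub>C x) = (a * b) *\<^sub>C x"
    and scaleC_one: "1 *\<^sub>C x = x"

text \<open>A locally convex Hausdorff space over the complex numbers is modelled as a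
complex vector space of type 'e together with a family of seminorms p indexed by
a type 'i (the fundamental system of seminorms), which is directed and separates
points. The topology is the one induced by this family.\<close>

definition lcHs :: "('i \<Rightarrow> 'e::cvec \<Rightarrow> real) \<Rightarrow> bool" where
  "lcHs p \<longleftrightarrow>
     (\<forall>a x. 0 \<le> p a x) \<and>
     (\<forall>a x y. p a (x + y) \<le> p a x + p a y) \<and>
     (\<forall>a c x. p a (c *\<^sub>C x) = norm c * p a x) \<and>
     (\<forall>a b. \<exists>c C. \<forall>x. max (p a x) (p b x) \<le> C * p c x) \<and>
     (\<forall>x. x \<noteq> 0 \<longrightarrow> (\<exists>a. 0 < p a x))"

definition lc_dual :: "('i \<Rightarrow> 'e::cvec \<Rightarrow> real) \<Rightarrow> ('e \<Rightarrow> complex) set" where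
  "lc_dual p = {\<phi>. (\<forall>x y. \<phi> (x + y) = \<phi> x + \<phi> y) \<and> (\<forall>c x. \<phi> (c *\<^sub>C x) = c * \<phi> x) \<and>
                    (\<exists>a C. \<forall>x. norm (\<phi> x) \<le> C * p a x)}"

definition lc_bounded :: "('i \<Rightarrow> 'e::cvec \<Rightarrow> real) \<Rightarrow> 'e set \<Rightarrow> bool" where
  "lc_bounded p B \<longleftrightarrow> (\<forall>a. \<exists>C. \<forall>x\<in>B. p a x \<le> C)"

definition lc_closed :: "('i \<Rightarrow> 'e::cvec \<Rightarrow> real) \<Rightarrow> 'e set \<Rightarrow> bool" where
  "lc_closed p D \<longleftrightarrow>
     (\<forall>x. (\<forall>a. \<forall>\<epsilon>>0. \<exists>d\<in>D. p a (x - d) < \<epsilon>) \<longrightarrow> x \<in> D)"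

definition abs_convex :: "'e::cvec set \<Rightarrow> bool" where
  "abs_convex D \<longleftrightarrow>
     (\<forall>x\<in>D. \<forall>y\<in>D. \<forall>a b::complex. norm a + norm b \<le> 1 \<longrightarrow> a *\<^sub>C x + b *\<^sub>C y \<in> D)"

definition disc_span :: "'e::cvec set \<Rightarrow> 'e set" where
  "disc_span D = (\<Union>n::nat. (\<lambda>d. of_nat n *\<^sub>C d) ` D)"

definition gauge_of :: "'e::cvec set \<Rightarrow> 'e \<Rightarrow> real" where
  "gauge_of D x = Inf {t::real. 0 < t \<and> (\<exists>d\<in>D. x = complex_of_real t *\<^sub>C d)}"

definition disc_banach :: "'e::cvec set \<Rightarrow> bool" where
  "disc_banach D \<longleftrightarrow>
     (\<forall>s::nat \<Rightarrow> 'e. (\<forall>n. s n \<in> disc_span D) \<longrightarrow>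
        (\<forall>\<epsilon>>0. \<exists>N. \<forall>m\<ge>N. \<forall>n\<ge>N. gauge_of D (s m - s n) < \<epsilon>) \<longrightarrow>
        (\<exists>x\<in>disc_span D. (\<lambda>n. gauge_of D (s n - x)) \<longlonglongrightarrow> 0))"

definition locally_complete :: "('i \<Rightarrow> 'e::cvec \<Rightarrow> real) \<Rightarrow> bool" where
  "locally_complete p \<longleftrightarrow>
     (\<forall>D. lc_closed p D \<and> lc_bounded p D \<and> abs_convex D \<longrightarrow> disc_banach D)"

definition determines_boundedness ::
  "('i \<Rightarrow> 'e::cvec \<Rightarrow> real) \<Rightarrow> ('e \<Rightarrow> complex) set \<Rightarrow> bool" where
  "determines_boundedness p G \<longleftrightarrow>
     (\<forall>B. (\<forall>g\<in>G. bounded (g ` B)) \<longrightarrow> lc_bounded p B)"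

definition linear_subspace_fun :: "('e \<Rightarrow> complex) set \<Rightarrow> bool" where
  "linear_subspace_fun G \<longleftrightarrow> (\<lambda>_. 0) \<in> G \<and>
     (\<forall>g\<in>G. \<forall>h\<in>G. (\<lambda>x. g x + h x) \<in> G) \<and> (\<forall>c. \<forall>g\<in>G. (\<lambda>x. c * g x) \<in> G)"

definition lc_has_deriv ::
  "('i \<Rightarrow> 'e::cvec \<Rightarrow> real) \<Rightarrow> (complex \<Rightarrow> 'e) \<Rightarrow> 'e \<Rightarrow> complex \<Rightarrow> bool" where
  "lc_has_deriv p F d z \<longleftrightarrow>
     (\<forall>a. ((\<lambda>h. p a (inverse h *\<^sub>C (F (z + h) - F z) - d)) \<longlongrightarrow> 0) (at 0))"

definition lc_deriv :: "('i \<Rightarrow> 'e::cvec \<Rightarrow> real) \<Rightarrow> (complex \<Rightarrow> 'e) \<Rightarrow> complex \<Rightarrow> 'e" where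
  "lc_deriv p F z = (THE d. lc_has_deriv p F d z)"

definition lc_holomorphic :: "('i \<Rightarrow> 'e::cvec \<Rightarrow> real) \<Rightarrow> (complex \<Rightarrow> 'e) \<Rightarrow> bool" where
  "lc_holomorphic p F \<longleftrightarrow> (\<forall>z\<in>ball 0 1. \<exists>d. lc_has_deriv p F d z)"

definition lc_bloch ::
  "('i \<Rightarrow> 'e::cvec \<Rightarrow> real) \<Rightarrow> (complex \<Rightarrow> real) \<Rightarrow> (complex \<Rightarrow> 'e) \<Rightarrow> bool" where
  "lc_bloch p \<nu> F \<longleftrightarrow> lc_holomorphic p F \<and>
     (\<forall>a. \<exists>C. p a (F 0) \<le> C \<and> (\<forall>z\<in>ball 0 1. p a (lc_deriv p F z) * \<nu> z \<le> C))"

definition scalar_bloch :: "(complex \<Rightarrow> real) \<Rightarrow> (complex \<Rightarrow> complex) \<Rightarrow> bool" where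
  "scalar_bloch \<nu> g \<longleftrightarrow> g holomorphic_on ball 0 1 \<and>
     (\<exists>C. \<forall>z\<in>ball 0 1. norm (deriv g z) * \<nu> z \<le> C)"

end

theory Submission
  imports Defs "HOL-Complex_Analysis.Complex_Analysis"
begin

text \<open>For every \<open>e' \<in> G\<close> the hypothesis gives a scalar Bloch function \<open>g e'\<close>; the task is to find
  vectors representing \<open>deriv (g e') z\<close> and \<open>g e' z\<close> simultaneously for all \<open>e'\<close>. Near a limit point
  of the set where the derivatives are represented, Newton interpolation at represented nodes,
  with the remainder estimated by Cauchy's formula, approximates the derivative at geometric
  speed uniformly in \<open>e'\<close>. The approximants are Cauchy in the gauge of a weakly bounded
  absolutely convex set, which is bounded because \<open>G\<close> determines boundedness, so local
  completeness supplies a representing vector. Connectedness of the disc spreads this to all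
  points; Riemann sums of the derivative then represent the primitive, and bounded second
  difference quotients give strong holomorphy and the Bloch bounds. Uniqueness is the identity
  theorem applied to every \<open>e' \<circ> F - e' \<circ> H\<close>.\<close>

lemma scaleC_zero_left [simp]: "(0::complex) *\<^sub>C (x::'e::cvec) = 0"
  using scaleC_add_left[of 0 0 x] by simp

lemma scaleC_minus_one_left: "(- 1) *\<^sub>C (x::'e::cvec) = - x"
  using scaleC_add_left[of "- 1" 1 x] by (simp add: scaleC_one eq_neg_iff_add_eq_0)

lemma scaleC_inverse_cancel: "c \<noteq> 0 \<Longrightarrow> c *\<^sub>C (inverse c *\<^sub>C (x::'e::cvec)) = x"
  by (simp add: scaleC_scaleC scaleC_one)

lemma lc_dual_add: "\<phi> \<in> lc_dual p \<Longrightarrow> \<phi> (x + y) = \<phi> x + \<phi> y"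
  by (simp add: lc_dual_def)

lemma lc_dual_scaleC: "\<phi> \<in> lc_dual p \<Longrightarrow> \<phi> (c *\<^sub>C x) = c * \<phi> x"
  by (simp add: lc_dual_def)

lemma lc_dual_zero: "\<phi> \<in> lc_dual p \<Longrightarrow> \<phi> 0 = 0"
  using lc_dual_scaleC[of \<phi> p 0 0] by simp

lemma lc_dual_minus: "\<phi> \<in> lc_dual p \<Longrightarrow> \<phi> (- x) = - \<phi> x"
  using lc_dual_scaleC[of \<phi> p "- 1" x] by (simp add: scaleC_minus_one_left)

lemma lc_dual_diff: "\<phi> \<in> lc_dual p \<Longrightarrow> \<phi> (x - y) = \<phi> x - \<phi> y"
  by (simp only: diff_conv_add_uminus lc_dual_add lc_dual_minus)

lemma lc_dual_sum: "\<phi> \<in> lc_dual p \<Longrightarrow> \<phi> (\<Sum>i\<in>A. c i *\<^sub>C v i) = (\<Sum>i\<in>A. c i * \<phi> (v i))"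
  by (induction A rule: infinite_finite_induct) (simp_all add: lc_dual_zero lc_dual_add lc_dual_scaleC)

lemma lc_dual_bound: "\<phi> \<in> lc_dual p \<Longrightarrow> \<exists>a C. \<forall>x. norm (\<phi> x) \<le> C * p a x"
  by (simp add: lc_dual_def)

lemma lcHs_nonneg: "lcHs p \<Longrightarrow> 0 \<le> p a x"
  by (simp add: lcHs_def)

lemma lcHs_triangle: "lcHs p \<Longrightarrow> p a (x + y) \<le> p a x + p a y"
  by (simp add: lcHs_def)

lemma lcHs_scaleC: "lcHs p \<Longrightarrow> p a (c *\<^sub>C x) = norm c * p a x"
  by (simp add: lcHs_def)

lemma lcHs_minus: "lcHs p \<Longrightarrow> p a (- x) = p a x"
  using lcHs_scaleC[of p a "- 1" x] by (simp add: scaleC_minus_one_left)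

lemma lcHs_zero: "lcHs p \<Longrightarrow> p a 0 = 0"
  using lcHs_scaleC[of p a 0 0] by simp

lemma lcHs_eq_iff_seminorms_zero:
  assumes "lcHs p"
  shows "x = y \<longleftrightarrow> (\<forall>a. p a (x - y) = 0)"
proof
  assume zero: "\<forall>a. p a (x - y) = 0"
  show "x = y"
  proof (rule ccontr)
    assume "x \<noteq> y"
    then have "x - y \<noteq> 0" by simp
    then obtain a where "0 < p a (x - y)" using assms unfolding lcHs_def by blast
    with zero show False by simp
  qed
qed (simp add: lcHs_zero[OF assms])

definition weakly_represented :: "('e \<Rightarrow> complex) set \<Rightarrow> (('e \<Rightarrow> complex) \<Rightarrow> complex) \<Rightarrow> bool" where
  "weakly_represented G v \<longleftrightarrow> (\<exists>x. \<forall>e'\<in>G. e' x = v e')"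

lemma weakly_represented_choice:
  "\<forall>z\<in>A. weakly_represented G (\<lambda>e'. h e' z) \<Longrightarrow> \<exists>F. \<forall>z\<in>A. \<forall>e'\<in>G. e' (F z) = h e' z"
  unfolding weakly_represented_def by (rule bchoice)

definition weak_box :: "('e \<Rightarrow> complex) set \<Rightarrow> (('e \<Rightarrow> complex) \<Rightarrow> real) \<Rightarrow> 'e set" where
  "weak_box G M = {x. \<forall>e'\<in>G. norm (e' x) \<le> M e'}"

lemma abs_convex_weak_box:
  assumes "G \<subseteq> lc_dual p" and M: "\<forall>e'\<in>G. 0 \<le> M e'"
  shows "abs_convex (weak_box G M)"
  unfolding abs_convex_def
proof (intro ballI allI impI)
  fix x y and a b :: complex
  assume x: "x \<in> weak_box G M" and y: "y \<in> weak_box G M" and ab: "norm a + norm b \<le> 1"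
  show "a *\<^sub>C x + b *\<^sub>C y \<in> weak_box G M" unfolding weak_box_def
  proof (intro CollectI ballI)
    fix e' assume e': "e' \<in> G"
    then have dual: "e' \<in> lc_dual p" using assms(1) by auto
    have "norm (e' (a *\<^sub>C x + b *\<^sub>C y)) \<le> norm a * norm (e' x) + norm b * norm (e' y)"
      using norm_triangle_ineq[of "a * e' x" "b * e' y"]
      by (simp add: lc_dual_add[OF dual] lc_dual_scaleC[OF dual] norm_mult)
    also have "\<dots> \<le> norm a * M e' + norm b * M e'"
      using x y e' unfolding weak_box_def by (intro add_mono mult_left_mono) auto
    also have "\<dots> \<le> M e'"
      using ab M e' by (simp add: mult_left_le_one_le flip: distrib_right)
    finally show "norm (e' (a *\<^sub>C x + b *\<^sub>C y)) \<le> M e'" .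
  qed
qed

lemma lc_closed_weak_box:
  assumes lc: "lcHs p" and "G \<subseteq> lc_dual p"
  shows "lc_closed p (weak_box G M)"
  unfolding lc_closed_def
proof (intro allI impI)
  fix x assume approx: "\<forall>a. \<forall>\<epsilon>>0. \<exists>d\<in>weak_box G M. p a (x - d) < \<epsilon>"
  show "x \<in> weak_box G M" unfolding weak_box_def
  proof (intro CollectI ballI)
    fix e' assume e': "e' \<in> G"
    then have dual: "e' \<in> lc_dual p" using assms(2) by auto
    obtain a C where C: "\<forall>x. norm (e' x) \<le> C * p a x" using lc_dual_bound[OF dual] by blast
    show "norm (e' x) \<le> M e'"
    proof (rule field_le_epsilon)
      fix \<epsilon> :: real assume "0 < \<epsilon>"
      then obtain d where d: "d \<in> weak_box G M" and pd: "p a (x - d) < \<epsilon> / (\<bar>C\<bar> + 1)"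
        using approx by (meson abs_ge_zero add_nonneg_pos divide_pos_pos zero_less_one)
      have "norm (e' x) \<le> norm (e' (x - d)) + norm (e' d)"
        using norm_triangle_ineq[of "e' (x - d)" "e' d"] by (simp add: lc_dual_diff[OF dual])
      also have "norm (e' (x - d)) \<le> C * p a (x - d)" using C by blast
      also have "\<dots> \<le> (\<bar>C\<bar> + 1) * p a (x - d)"
        using lcHs_nonneg[OF lc] by (simp add: mult_right_mono)
      also have "(\<bar>C\<bar> + 1) * p a (x - d) \<le> \<epsilon>"
        using pd by (simp add: field_simps)
      also have "norm (e' d) \<le> M e'" using d e' unfolding weak_box_def by blast
      finally show "norm (e' x) \<le> M e' + \<epsilon>" by simp
    qed
  qed
qed

lemma weak_box_scaleC_mem:
  assumes "G \<subseteq> lc_dual p" and M: "\<forall>e'\<in>G. 0 \<le> M e'"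
    and y: "\<forall>e'\<in>G. norm (e' y) \<le> M e' * K" and "0 \<le> K" "K < t"
  shows "\<exists>d\<in>weak_box G M. y = complex_of_real t *\<^sub>C d"
proof
  have t: "0 < t" using assms by simp
  show "y = complex_of_real t *\<^sub>C (inverse (complex_of_real t) *\<^sub>C y)"
    using t by (simp add: scaleC_inverse_cancel)
  show "inverse (complex_of_real t) *\<^sub>C y \<in> weak_box G M" unfolding weak_box_def
  proof (intro CollectI ballI)
    fix e' assume e': "e' \<in> G"
    then have "e' \<in> lc_dual p" using assms(1) by auto
    then have "norm (e' (inverse (complex_of_real t) *\<^sub>C y)) = norm (e' y) / t"
      using t by (simp add: lc_dual_scaleC norm_mult norm_inverse divide_inverse mult.commute)
    also have "\<dots> \<le> M e' * K / t" using y e' t by (simp add: divide_right_mono)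
    also have "\<dots> \<le> M e'"
      using M e' assms(4,5) t by (simp add: divide_le_eq mult_left_mono)
    finally show "norm (e' (inverse (complex_of_real t) *\<^sub>C y)) \<le> M e'" .
  qed
qed

lemma gauge_of_weak_box_le:
  assumes "G \<subseteq> lc_dual p" and "\<forall>e'\<in>G. 0 \<le> M e'"
    and y: "\<forall>e'\<in>G. norm (e' y) \<le> M e' * K" and K: "0 \<le> K"
  shows "gauge_of (weak_box G M) y \<le> K"
proof (rule field_le_epsilon)
  fix \<epsilon> :: real assume "0 < \<epsilon>"
  then have "K + \<epsilon> \<in> {t. 0 < t \<and> (\<exists>d\<in>weak_box G M. y = complex_of_real t *\<^sub>C d)}"
    using weak_box_scaleC_mem[OF assms(1,2) y K, of "K + \<epsilon>"] K by auto
  then show "gauge_of (weak_box G M) y \<le> K + \<epsilon>"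
    unfolding gauge_of_def by (rule cInf_lower) (auto intro: bdd_belowI[of _ 0])
qed

lemma norm_le_gauge_of_weak_box:
  assumes "G \<subseteq> lc_dual p" and M: "\<forall>e'\<in>G. 0 \<le> M e'" and e': "e' \<in> G"
    and y: "\<forall>e'\<in>G. norm (e' y) \<le> M e' * K" and K: "0 \<le> K"
  shows "norm (e' y) \<le> M e' * gauge_of (weak_box G M) y"
proof -
  define T where "T = {t. 0 < t \<and> (\<exists>d\<in>weak_box G M. y = complex_of_real t *\<^sub>C d)}"
  have dual: "e' \<in> lc_dual p" using e' assms(1) by auto
  obtain d where "d \<in> weak_box G M" "y = complex_of_real (K + 1) *\<^sub>C d"
    using weak_box_scaleC_mem[OF assms(1) M y K, of "K + 1"] by auto
  then have "K + 1 \<in> T" using K unfolding T_def by auto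
  then have T_nonempty: "T \<noteq> {}" by blast
  have bound: "norm (e' y) \<le> M e' * t" if "t \<in> T" for t
  proof -
    from that obtain d where t: "0 < t" and d: "d \<in> weak_box G M" and yd: "y = complex_of_real t *\<^sub>C d"
      unfolding T_def by blast
    have "norm (e' y) = t * norm (e' d)" using t by (simp add: yd lc_dual_scaleC[OF dual] norm_mult)
    also have "\<dots> \<le> t * M e'" using d e' t unfolding weak_box_def by (simp add: mult_left_mono)
    finally show ?thesis by (simp add: mult.commute)
  qed
  show ?thesis
  proof (cases "M e' = 0")
    case True
    then show ?thesis using bound T_nonempty by auto
  next
    case False
    then have "0 < M e'" using M e' by (simp add: order_less_le)
    moreover have "norm (e' y) / M e' \<le> Inf T"
      by (rule cInf_greatest[OF T_nonempty]) (use bound \<open>0 < M e'\<close> in \<open>simp add: field_simps mult.commute\<close>)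
    ultimately show ?thesis unfolding gauge_of_def T_def[symmetric] by (simp add: field_simps mult.commute)
  qed
qed

lemma weak_tendsto_if_gauge_of_weak_box_tendsto:
  assumes "G \<subseteq> lc_dual p" and M: "\<forall>e'\<in>G. 0 \<le> M e'" and s: "\<forall>n. s n \<in> weak_box G M"
    and "x \<in> disc_span (weak_box G M)" and lim: "(\<lambda>n. gauge_of (weak_box G M) (s n - x)) \<longlonglongrightarrow> 0"
    and e': "e' \<in> G"
  shows "(\<lambda>n. e' (s n)) \<longlonglongrightarrow> e' x"
proof -
  obtain N d where d: "d \<in> weak_box G M" and x: "x = of_nat N *\<^sub>C d"
    using assms(4) unfolding disc_span_def by blast
  have bound: "\<forall>e'\<in>G. norm (e' (s n - x)) \<le> M e' * (1 + real N)" for n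
  proof
    fix e' assume e': "e' \<in> G"
    then have dual: "e' \<in> lc_dual p" using assms(1) by auto
    have "e' (s n - x) = e' (s n) - of_nat N * e' d"
      by (simp add: x lc_dual_diff[OF dual] lc_dual_scaleC[OF dual])
    then have "norm (e' (s n - x)) \<le> norm (e' (s n)) + real N * norm (e' d)"
      using norm_triangle_ineq4[of "e' (s n)" "of_nat N * e' d"] by (simp add: norm_mult)
    also have "\<dots> \<le> M e' + real N * M e'"
      using s d e' unfolding weak_box_def by (intro add_mono mult_left_mono) auto
    finally show "norm (e' (s n - x)) \<le> M e' * (1 + real N)" by (simp add: algebra_simps)
  qed
  have "(\<lambda>n. e' (s n) - e' x) \<longlonglongrightarrow> 0"
  proof (rule Lim_null_comparison)
    have "e' \<in> lc_dual p" using assms(1) e' by auto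
    then show "\<forall>\<^sub>F n in sequentially. norm (e' (s n) - e' x) \<le> M e' * gauge_of (weak_box G M) (s n - x)"
      using norm_le_gauge_of_weak_box[OF assms(1) M e' bound] by (simp add: lc_dual_diff)
    show "(\<lambda>n. M e' * gauge_of (weak_box G M) (s n - x)) \<longlonglongrightarrow> 0"
      using tendsto_mult_right_zero[OF lim] by simp
  qed
  then show ?thesis by (simp add: LIM_zero_iff)
qed

locale bounded_determining_dual =
  fixes p :: "'i \<Rightarrow> 'e::cvec \<Rightarrow> real" and G :: "('e \<Rightarrow> complex) set"
  assumes lcHs: "lcHs p" and G_dual: "G \<subseteq> lc_dual p" and G_det: "determines_boundedness p G"
begin

lemma G_lc_dual: "e' \<in> G \<Longrightarrow> e' \<in> lc_dual p"
  using G_dual by auto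

lemma lc_bounded_if_weakly_bounded:
  assumes "\<And>e'. e' \<in> G \<Longrightarrow> \<exists>C. \<forall>x\<in>B. norm (e' x) \<le> C"
  shows "lc_bounded p B"
proof -
  have "\<forall>e'\<in>G. bounded (e' ` B)"
    using assms unfolding bounded_iff by (metis imageE)
  then show ?thesis using G_det unfolding determines_boundedness_def by blast
qed

lemma eq_if_weakly_eq:
  assumes eq: "\<forall>e'\<in>G. e' x = e' y"
  shows "x = y"
proof (rule ccontr)
  assume "x \<noteq> y"
  then have "x - y \<noteq> 0" by simp
  then obtain a where a: "0 < p a (x - y)" using lcHs unfolding lcHs_def by blast
  have "lc_bounded p (range (\<lambda>n::nat. of_nat n *\<^sub>C (x - y)))"
  proof (rule lc_bounded_if_weakly_bounded)
    fix e' assume e': "e' \<in> G"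
    then have "e' (of_nat n *\<^sub>C (x - y)) = 0" for n :: nat
      using eq by (simp add: lc_dual_scaleC[OF G_lc_dual[OF e']] lc_dual_diff[OF G_lc_dual[OF e']])
    then show "\<exists>C. \<forall>z\<in>range (\<lambda>n::nat. of_nat n *\<^sub>C (x - y)). norm (e' z) \<le> C" by auto
  qed
  then obtain C where C: "\<forall>n::nat. real n * p a (x - y) \<le> C"
    unfolding lc_bounded_def by (auto simp: lcHs_scaleC[OF lcHs])
  obtain n :: nat where "C / p a (x - y) < n" using reals_Archimedean2 by blast
  with C[rule_format, of n] a show False by (simp add: field_simps)
qed

lemma weak_box_lc_bounded: "lc_bounded p (weak_box G M)"
  by (rule lc_bounded_if_weakly_bounded) (auto simp: weak_box_def)

end

locale locally_complete_dual = bounded_determining_dual +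
  assumes locally_complete: "locally_complete p"
begin

lemma weak_limit_exists:
  assumes M: "\<forall>e'\<in>G. 0 \<le> M e'" and s: "\<forall>n. s n \<in> weak_box G M"
    and cauchy: "\<forall>e'\<in>G. \<forall>m n. norm (e' (s m - s n)) \<le> M e' * (\<delta> m + \<delta> n)"
    and \<delta>: "\<forall>n. 0 \<le> \<delta> n" "\<delta> \<longlonglongrightarrow> 0"
  shows "\<exists>x. \<forall>e'\<in>G. (\<lambda>n. e' (s n)) \<longlonglongrightarrow> e' x"
proof -
  let ?D = "weak_box G M"
  have "disc_banach ?D"
    using locally_complete lc_closed_weak_box[OF lcHs G_dual] weak_box_lc_bounded
      abs_convex_weak_box[OF G_dual M] unfolding locally_complete_def by blast
  moreover have "s n \<in> disc_span ?D" for n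
  proof -
    have "s n = of_nat 1 *\<^sub>C s n" by (simp add: scaleC_one)
    then show ?thesis using s unfolding disc_span_def by blast
  qed
  moreover have "\<exists>N. \<forall>m\<ge>N. \<forall>n\<ge>N. gauge_of ?D (s m - s n) < \<epsilon>" if "0 < \<epsilon>" for \<epsilon>
  proof -
    have "\<forall>\<^sub>F n in sequentially. \<delta> n < \<epsilon> / 2"
      using order_tendstoD(2)[OF \<delta>(2), of "\<epsilon> / 2"] that by simp
    then obtain N where N: "\<forall>n\<ge>N. \<delta> n < \<epsilon> / 2"
      unfolding eventually_sequentially by blast
    have "gauge_of ?D (s m - s n) \<le> \<delta> m + \<delta> n" for m n
      using cauchy \<delta>(1) by (intro gauge_of_weak_box_le[OF G_dual M]) (auto simp: add_nonneg_nonneg)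
    moreover have "\<delta> m + \<delta> n < \<epsilon>" if "N \<le> m" "N \<le> n" for m n
      using N[rule_format, OF that(1)] N[rule_format, OF that(2)] by linarith
    ultimately show ?thesis by (blast intro: order_le_less_trans)
  qed
  ultimately obtain x where "x \<in> disc_span ?D" and "(\<lambda>n. gauge_of ?D (s n - x)) \<longlonglongrightarrow> 0"
    unfolding disc_banach_def by blast
  then show ?thesis using weak_tendsto_if_gauge_of_weak_box_tendsto[OF G_dual M s] by blast
qed

lemma weakly_represented_if_approximable:
  assumes K: "\<forall>e'\<in>G. 0 \<le> K e'"
    and approx: "\<forall>e'\<in>G. \<forall>n. norm (v e' - e' (s n)) \<le> K e' * \<delta> n"
    and \<delta>: "\<forall>n. 0 \<le> \<delta> n" "\<delta> \<longlonglongrightarrow> 0"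
  shows "weakly_represented G v"
proof -
  have "Bseq \<delta>" using \<delta>(2) by (intro convergent_imp_Bseq convergentI)
  then obtain B0 where "\<forall>n. norm (\<delta> n) \<le> B0" by (rule BseqE)
  define B where "B = max B0 1"
  have B: "\<forall>n. \<delta> n \<le> B" and "1 \<le> B"
    using \<open>\<forall>n. norm (\<delta> n) \<le> B0\<close> unfolding B_def by (auto simp: abs_le_iff max.coboundedI1)
  define M where "M e' = norm (v e') + K e' * B" for e'
  have K_le_M: "K e' \<le> M e'" if "e' \<in> G" for e'
  proof -
    have "K e' * 1 \<le> K e' * B" using K that \<open>1 \<le> B\<close> by (intro mult_left_mono) auto
    then show ?thesis by (simp add: M_def add_increasing)
  qed
  have M: "\<forall>e'\<in>G. 0 \<le> M e'" using K K_le_M order_trans by blast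
  have s_box: "\<forall>n. s n \<in> weak_box G M" unfolding weak_box_def
  proof (intro allI CollectI ballI)
    fix e' n assume e': "e' \<in> G"
    have "norm (e' (s n)) \<le> norm (v e') + norm (v e' - e' (s n))"
      using norm_triangle_ineq4[of "v e'" "v e' - e' (s n)"] by simp
    also have "norm (v e' - e' (s n)) \<le> K e' * B"
      using approx e' mult_left_mono[OF B[rule_format, of n], of "K e'"] K by (meson order_trans)
    finally show "norm (e' (s n)) \<le> M e'" by (simp add: M_def)
  qed
  have cauchy: "\<forall>e'\<in>G. \<forall>m n. norm (e' (s m - s n)) \<le> M e' * (\<delta> m + \<delta> n)"
  proof (intro ballI allI)
    fix e' m n assume e': "e' \<in> G"
    have "norm (e' (s m - s n)) \<le> norm (v e' - e' (s n)) + norm (v e' - e' (s m))"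
      using norm_triangle_ineq4[of "v e' - e' (s n)" "v e' - e' (s m)"]
      by (simp add: lc_dual_diff[OF G_lc_dual[OF e']])
    also have "\<dots> \<le> K e' * (\<delta> m + \<delta> n)"
      using add_mono[OF approx[rule_format, OF e', of n] approx[rule_format, OF e', of m]]
      by (simp add: distrib_left add.commute)
    also have "\<dots> \<le> M e' * (\<delta> m + \<delta> n)"
      using \<delta>(1) K_le_M[OF e'] by (intro mult_right_mono) (auto simp: add_nonneg_nonneg)
    finally show "norm (e' (s m - s n)) \<le> M e' * (\<delta> m + \<delta> n)" .
  qed
  obtain x where x: "\<forall>e'\<in>G. (\<lambda>n. e' (s n)) \<longlonglongrightarrow> e' x"
    using weak_limit_exists[OF M s_box cauchy \<delta>] by blast
  have "e' x = v e'" if e': "e' \<in> G" for e'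
  proof -
    have "(\<lambda>n. v e' - e' (s n)) \<longlonglongrightarrow> 0"
    proof (rule Lim_null_comparison)
      show "\<forall>\<^sub>F n in sequentially. norm (v e' - e' (s n)) \<le> K e' * \<delta> n"
        using approx e' by simp
    qed (rule tendsto_mult_right_zero[OF \<delta>(2)])
    from tendsto_diff[OF tendsto_const[of "v e'"] this]
    have "(\<lambda>n. e' (s n)) \<longlonglongrightarrow> v e'" by simp
    then show ?thesis using x e' LIMSEQ_unique by blast
  qed
  then show ?thesis unfolding weakly_represented_def by blast
qed

end

definition newton_basis :: "(nat \<Rightarrow> complex) \<Rightarrow> nat \<Rightarrow> complex \<Rightarrow> complex" where
  "newton_basis u k v = (\<Prod>j<k. v - u j)"

text \<open>\<open>divdiff_weight u k j = 1 / (\<Prod>i\<le>k, i \<noteq> j. u j - u i)\<close>, so that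
  \<open>\<Sum>j\<le>k. divdiff_weight u k j * h (u j)\<close> is the divided difference \<open>h[u 0, \<dots>, u k]\<close>;
  the recursion is the one produced by splitting off the factor of \<open>u (Suc k)\<close>.\<close>
fun divdiff_weight :: "(nat \<Rightarrow> complex) \<Rightarrow> nat \<Rightarrow> nat \<Rightarrow> complex" where
  "divdiff_weight u 0 j = (if j = 0 then 1 else 0)"
| "divdiff_weight u (Suc k) j =
     (if j \<le> k then divdiff_weight u k j / (u j - u (Suc k))
      else if j = Suc k then - (\<Sum>i\<le>k. divdiff_weight u k i / (u i - u (Suc k))) else 0)"

lemma newton_basis_Suc: "newton_basis u (Suc k) v = newton_basis u k v * (v - u k)"
  by (simp add: newton_basis_def)

lemma newton_basis_nonzero: "\<forall>j<k. v \<noteq> u j \<Longrightarrow> newton_basis u k v \<noteq> 0"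
  by (simp add: newton_basis_def)

lemma inverse_newton_basis_partial_fractions:
  assumes "inj u" and "\<forall>j\<le>k. \<zeta> \<noteq> u j"
  shows "1 / newton_basis u (Suc k) \<zeta> = (\<Sum>j\<le>k. divdiff_weight u k j / (\<zeta> - u j))"
  using assms(2)
proof (induction k)
  case 0
  then show ?case by (simp add: newton_basis_def)
next
  case (Suc k)
  let ?v = "u (Suc k)"
  have split: "c / (\<zeta> - u j) / (\<zeta> - ?v) = c / (u j - ?v) / (\<zeta> - u j) - c / (u j - ?v) / (\<zeta> - ?v)"
    if "j \<le> k" for j c
  proof -
    have "u j \<noteq> ?v" using assms(1) that by (auto dest: injD)
    moreover have "\<zeta> \<noteq> u j" "\<zeta> \<noteq> ?v" using Suc.prems that by auto
    ultimately show ?thesis by (simp add: divide_simps) (simp add: algebra_simps)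
  qed
  have IH: "1 / newton_basis u (Suc k) \<zeta> = (\<Sum>j\<le>k. divdiff_weight u k j / (\<zeta> - u j))"
    using Suc by simp
  have "1 / newton_basis u (Suc (Suc k)) \<zeta> = (1 / newton_basis u (Suc k) \<zeta>) / (\<zeta> - ?v)"
    by (simp add: newton_basis_Suc[of u "Suc k"])
  also have "\<dots> = (\<Sum>j\<le>k. divdiff_weight u k j / (\<zeta> - u j) / (\<zeta> - ?v))"
    by (simp only: IH sum_divide_distrib)
  also have "\<dots> = (\<Sum>j\<le>k. divdiff_weight u k j / (u j - ?v) / (\<zeta> - u j)
                   - divdiff_weight u k j / (u j - ?v) / (\<zeta> - ?v))"
    by (rule sum.cong[OF refl], rule split) simp
  also have "\<dots> = (\<Sum>j\<le>k. divdiff_weight u k j / (u j - ?v) / (\<zeta> - u j))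
                   - (\<Sum>j\<le>k. divdiff_weight u k j / (u j - ?v)) / (\<zeta> - ?v)"
    by (simp only: sum_subtractf sum_divide_distrib)
  also have "\<dots> = (\<Sum>j\<le>Suc k. divdiff_weight u (Suc k) j / (\<zeta> - u j))"
    by simp
  finally show ?case .
qed

lemma inverse_diff_newton_expansion:
  assumes "\<zeta> \<noteq> z" and "\<forall>j\<le>n. \<zeta> \<noteq> u j"
  shows "1 / (\<zeta> - z) = (\<Sum>k\<le>n. newton_basis u k z / newton_basis u (Suc k) \<zeta>)
           + newton_basis u (Suc n) z / (newton_basis u (Suc n) \<zeta> * (\<zeta> - z))"
  using assms(2)
proof (induction n)
  case 0
  then show ?case using assms(1) by (simp add: newton_basis_def divide_simps)
next
  case (Suc n)
  have "newton_basis u (Suc n) \<zeta> \<noteq> 0" using Suc.prems by (intro newton_basis_nonzero) auto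
  moreover have "\<zeta> - u (Suc n) \<noteq> 0" "\<zeta> - z \<noteq> 0" using Suc.prems assms(1) by auto
  ultimately have "newton_basis u (Suc n) z / (newton_basis u (Suc n) \<zeta> * (\<zeta> - z)) =
      newton_basis u (Suc n) z / newton_basis u (Suc (Suc n)) \<zeta>
      + newton_basis u (Suc (Suc n)) z / (newton_basis u (Suc (Suc n)) \<zeta> * (\<zeta> - z))"
    by (simp add: newton_basis_Suc[of u "Suc n"] divide_simps) (simp add: algebra_simps)
  then show ?case using Suc by simp
qed

lemma newton_kernel_remainder:
  assumes "inj u" and "\<zeta> \<noteq> z" and "\<forall>j\<le>n. \<zeta> \<noteq> u j"
  shows "1 / (\<zeta> - z) - (\<Sum>k\<le>n. newton_basis u k z * (\<Sum>j\<le>k. divdiff_weight u k j / (\<zeta> - u j)))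
         = newton_basis u (Suc n) z / (newton_basis u (Suc n) \<zeta> * (\<zeta> - z))"
proof -
  have "(\<Sum>j\<le>k. divdiff_weight u k j / (\<zeta> - u j)) = 1 / newton_basis u (Suc k) \<zeta>" if "k \<le> n" for k
    using inverse_newton_basis_partial_fractions[OF assms(1)] assms(3) that by simp
  then show ?thesis
    using inverse_diff_newton_expansion[OF assms(2,3)] by simp
qed

lemma norm_newton_basis_ratio_le:
  assumes "\<forall>j<k. norm (z - u j) \<le> q * norm (\<zeta> - u j)" and "\<forall>j<k. \<zeta> \<noteq> u j" and "0 \<le> q"
  shows "norm (newton_basis u k z / newton_basis u k \<zeta>) \<le> q ^ k"
proof -
  have "norm (newton_basis u k z / newton_basis u k \<zeta>) = (\<Prod>j<k. norm (z - u j) / norm (\<zeta> - u j))"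
    by (simp add: newton_basis_def prod_dividef[symmetric] prod_norm[symmetric] norm_divide)
  also have "\<dots> \<le> (\<Prod>j<k. q)"
    using assms by (intro prod_mono) (auto simp: divide_le_eq)
  finally show ?thesis by simp
qed

lemma norm_diff_ge_sphere_ball: "norm (\<zeta> - w) = R \<Longrightarrow> v \<in> ball w \<rho> \<Longrightarrow> R - \<rho> \<le> norm (\<zeta> - v)"
  using norm_triangle_ineq[of "\<zeta> - v" "v - w"] by (simp add: dist_norm norm_minus_commute)

lemma newton_kernel_bound_on_circle:
  assumes u: "inj u" "\<forall>j. u j \<in> ball w \<rho>" and z: "z \<in> ball w \<rho>"
    and \<zeta>: "norm (\<zeta> - w) = 5 * \<rho>" and \<rho>: "0 < \<rho>"
  shows "norm (1 / (\<zeta> - z) - (\<Sum>k\<le>n. newton_basis u k z * (\<Sum>j\<le>k. divdiff_weight u k j / (\<zeta> - u j))))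
           \<le> (1 / 2) ^ Suc n / (4 * \<rho>)"
proof -
  have far: "4 * \<rho> \<le> norm (\<zeta> - v)" if "v \<in> ball w \<rho>" for v
    using norm_diff_ge_sphere_ball[OF \<zeta> that] by simp
  have ne: "\<zeta> \<noteq> v" if "v \<in> ball w \<rho>" for v
    using far[OF that] \<rho> by auto
  have \<zeta>_u: "\<forall>j. \<zeta> \<noteq> u j" and \<zeta>_z: "\<zeta> \<noteq> z"
    using ne u(2) z by auto
  have "norm (z - u j) \<le> 1 / 2 * norm (\<zeta> - u j)" for j
  proof -
    have "norm (z - w) < \<rho>" "norm (u j - w) < \<rho>"
      using z u(2) by (auto simp: dist_norm norm_minus_commute)
    then have "norm (z - u j) \<le> 2 * \<rho>"
      using norm_triangle_ineq4[of "z - w" "u j - w"] by simp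
    then show ?thesis using far[OF u(2)[rule_format, of j]] by simp
  qed
  then have ratio: "norm (newton_basis u (Suc n) z / newton_basis u (Suc n) \<zeta>) \<le> (1 / 2) ^ Suc n"
    using \<zeta>_u by (intro norm_newton_basis_ratio_le) auto
  have "norm (1 / (\<zeta> - z) - (\<Sum>k\<le>n. newton_basis u k z * (\<Sum>j\<le>k. divdiff_weight u k j / (\<zeta> - u j))))
      = norm (newton_basis u (Suc n) z / newton_basis u (Suc n) \<zeta>) / norm (\<zeta> - z)"
    using newton_kernel_remainder[OF u(1) \<zeta>_z] \<zeta>_u by (simp add: norm_divide norm_mult)
  also have "\<dots> \<le> (1 / 2) ^ Suc n / (4 * \<rho>)"
    using ratio far[OF z] \<rho> by (intro frac_le) auto
  finally show ?thesis .
qed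

lemma newton_interpolation_error:
  fixes h :: "complex \<Rightarrow> complex"
  assumes hol: "h holomorphic_on cball w (5 * \<rho>)" and \<rho>: "0 < \<rho>"
    and u: "inj u" "\<forall>j. u j \<in> ball w \<rho>" and z: "z \<in> ball w \<rho>"
    and M: "\<forall>\<zeta>\<in>sphere w (5 * \<rho>). norm (h \<zeta>) \<le> M"
  shows "norm (h z - (\<Sum>k\<le>n. newton_basis u k z * (\<Sum>j\<le>k. divdiff_weight u k j * h (u j))))
           \<le> M * (5 / 4) * (1 / 2) ^ Suc n"
proof -
  let ?\<gamma> = "circlepath w (5 * \<rho>)"
  define E where "E = h z - (\<Sum>k\<le>n. newton_basis u k z * (\<Sum>j\<le>k. divdiff_weight u k j * h (u j)))"
  define I where "I \<zeta> = h \<zeta> / (\<zeta> - z)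
    - (\<Sum>k\<le>n. newton_basis u k z * (\<Sum>j\<le>k. divdiff_weight u k j * (h \<zeta> / (\<zeta> - u j))))" for \<zeta>
  have cauchy: "((\<lambda>\<zeta>. h \<zeta> / (\<zeta> - v)) has_contour_integral (2 * of_real pi * \<i> * h v)) ?\<gamma>"
    if "v \<in> ball w \<rho>" for v
    using that \<rho> by (intro Cauchy_integral_circlepath_simple hol) (auto simp: dist_norm norm_minus_commute)
  have "(I has_contour_integral (2 * of_real pi * \<i> * h z
      - (\<Sum>k\<le>n. newton_basis u k z * (\<Sum>j\<le>k. divdiff_weight u k j * (2 * of_real pi * \<i> * h (u j)))))) ?\<gamma>"
    unfolding I_def using u(2) z
    by (intro has_contour_integral_diff has_contour_integral_sum has_contour_integral_lmul cauchy) auto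
  then have integral: "(I has_contour_integral (2 * of_real pi * \<i>) * E) ?\<gamma>"
    by (simp add: E_def right_diff_distrib sum_distrib_left mult_ac)
  have "w + complex_of_real (5 * \<rho>) \<in> sphere w (5 * \<rho>)" using \<rho> by (simp add: dist_norm)
  then have "0 \<le> M" using M norm_ge_zero order_trans by blast
  have bound: "norm (I \<zeta>) \<le> M * ((1 / 2) ^ Suc n / (4 * \<rho>))" if \<zeta>: "norm (\<zeta> - w) = 5 * \<rho>" for \<zeta>
  proof -
    have "I \<zeta> = h \<zeta> * (1 / (\<zeta> - z) - (\<Sum>k\<le>n. newton_basis u k z * (\<Sum>j\<le>k. divdiff_weight u k j / (\<zeta> - u j))))"
      by (simp add: I_def right_diff_distrib sum_distrib_left mult_ac)
    then have "norm (I \<zeta>) = norm (h \<zeta>)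
        * norm (1 / (\<zeta> - z) - (\<Sum>k\<le>n. newton_basis u k z * (\<Sum>j\<le>k. divdiff_weight u k j / (\<zeta> - u j))))"
      by (simp only: norm_mult)
    also have "\<dots> \<le> M * ((1 / 2) ^ Suc n / (4 * \<rho>))"
      using M \<zeta> newton_kernel_bound_on_circle[OF u z \<zeta> \<rho>, of n] \<open>0 \<le> M\<close>
      by (intro mult_mono) (auto simp: dist_norm norm_minus_commute)
    finally show ?thesis .
  qed
  have "norm ((2 * of_real pi * \<i>) * E) \<le> M * ((1 / 2) ^ Suc n / (4 * \<rho>)) * (2 * pi * (5 * \<rho>))"
    using \<rho> \<open>0 \<le> M\<close> by (intro has_contour_integral_bound_circlepath[OF integral _ _ bound]) auto
  moreover have "norm ((2 * of_real pi * \<i>) * E) = 2 * pi * norm E"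
    by (simp add: norm_mult)
  moreover have "M * ((1 / 2) ^ Suc n / (4 * \<rho>)) * (2 * pi * (5 * \<rho>)) = 2 * pi * (M * (5 / 4) * (1 / 2) ^ Suc n)"
    using \<rho> by (simp add: field_simps)
  ultimately have "2 * pi * norm E \<le> 2 * pi * (M * (5 / 4) * (1 / 2) ^ Suc n)"
    by metis
  then show ?thesis unfolding E_def by (rule mult_left_le_imp_le) simp
qed

lemma holomorphic_bounded_on_compact:
  assumes "f holomorphic_on S" and "K \<subseteq> S" and "compact K"
  shows "\<exists>C\<ge>0. \<forall>z\<in>K. norm (f z) \<le> C"
proof -
  have "continuous_on K f"
    using assms(1,2) by (intro holomorphic_on_imp_continuous_on) (rule holomorphic_on_subset)
  then have "bounded (f ` K)" using assms(3) by (intro compact_imp_bounded compact_continuous_image)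
  then obtain C where "\<forall>z\<in>K. norm (f z) \<le> C" unfolding bounded_iff by blast
  then show ?thesis by (intro exI[of _ "max C 0"]) auto
qed

context locally_complete_dual
begin

lemma weakly_represented_near_limpt:
  assumes hol: "\<forall>e'\<in>G. h e' holomorphic_on ball 0 1" and w: "w \<in> ball 0 1"
    and lim: "w islimpt {z \<in> ball 0 1. weakly_represented G (\<lambda>e'. h e' z)}"
  shows "\<exists>\<rho>>0. \<forall>z\<in>ball w \<rho>. weakly_represented G (\<lambda>e'. h e' z)"
proof -
  define \<rho> where "\<rho> = (1 - norm w) / 10"
  have \<rho>: "0 < \<rho>" using w by (simp add: \<rho>_def)
  have cball_sub: "cball w (5 * \<rho>) \<subseteq> ball 0 1"
    using w by (simp add: cball_subset_ball_iff \<rho>_def field_simps)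
  have "infinite ({z \<in> ball 0 1. weakly_represented G (\<lambda>e'. h e' z)} \<inter> ball w \<rho>)"
    using lim \<rho> unfolding islimpt_eq_infinite_ball by blast
  then obtain u :: "nat \<Rightarrow> complex"
    where "inj u" and "range u \<subseteq> {z \<in> ball 0 1. weakly_represented G (\<lambda>e'. h e' z)} \<inter> ball w \<rho>"
    using infinite_countable_subset by blast
  then have u: "inj u" "\<forall>j. u j \<in> ball w \<rho>" and "\<forall>j. weakly_represented G (\<lambda>e'. h e' (u j))"
    by blast+
  then have "\<forall>j. \<exists>x. \<forall>e'\<in>G. e' x = h e' (u j)"
    unfolding weakly_represented_def by blast
  then obtain \<phi> where \<phi>: "\<forall>j. \<forall>e'\<in>G. e' (\<phi> j) = h e' (u j)"
    by (rule choice[THEN exE])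
  have hol_cball: "h e' holomorphic_on cball w (5 * \<rho>)" if "e' \<in> G" for e'
    using hol that cball_sub holomorphic_on_subset by blast
  have "\<forall>e'\<in>G. \<exists>C\<ge>0. \<forall>\<zeta>\<in>sphere w (5 * \<rho>). norm (h e' \<zeta>) \<le> C"
    using holomorphic_bounded_on_compact[OF hol_cball sphere_cball compact_sphere] by blast
  from bchoice[OF this] obtain M
    where M: "\<forall>e'\<in>G. 0 \<le> M e'" "\<forall>e'\<in>G. \<forall>\<zeta>\<in>sphere w (5 * \<rho>). norm (h e' \<zeta>) \<le> M e'"
    by blast
  have "weakly_represented G (\<lambda>e'. h e' z)" if z: "z \<in> ball w \<rho>" for z
  proof -
    \<comment> \<open>the Newton interpolant of \<open>h\<close> at \<open>z\<close>, with each value \<open>h e' (u j)\<close> replaced by its representative\<close>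
    define s where "s n = (\<Sum>k\<le>n. newton_basis u k z *\<^sub>C (\<Sum>j\<le>k. divdiff_weight u k j *\<^sub>C \<phi> j))" for n
    have approx: "norm (h e' z - e' (s n)) \<le> M e' * ((5 / 4) * (1 / 2) ^ Suc n)" if e': "e' \<in> G" for e' n
    proof -
      have "e' (s n) = (\<Sum>k\<le>n. newton_basis u k z * (\<Sum>j\<le>k. divdiff_weight u k j * h e' (u j)))"
        using \<phi> e' by (simp add: s_def lc_dual_sum[OF G_lc_dual[OF e']])
      moreover have "norm (h e' z - (\<Sum>k\<le>n. newton_basis u k z * (\<Sum>j\<le>k. divdiff_weight u k j * h e' (u j))))
          \<le> M e' * (5 / 4) * (1 / 2) ^ Suc n"
        using newton_interpolation_error[OF hol_cball[OF e'] \<rho> u z] M(2) e' by blast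
      ultimately show ?thesis by (simp add: mult.assoc)
    qed
    have "(\<lambda>n. (1 / 2 :: real) ^ Suc n) \<longlonglongrightarrow> 0"
      by (rule LIMSEQ_Suc[OF LIMSEQ_power_zero]) simp
    then show ?thesis
      using M(1) approx
      by (intro weakly_represented_if_approximable[where s = s and \<delta> = "\<lambda>n. (5 / 4) * (1 / 2) ^ Suc n"])
        (auto intro: tendsto_mult_right_zero)
  qed
  then show ?thesis using \<rho> by blast
qed

lemma weakly_represented_on_ball:
  assumes hol: "\<forall>e'\<in>G. h e' holomorphic_on ball 0 1" and w0: "w0 \<in> ball 0 1"
    and lim: "w0 islimpt {z \<in> ball 0 1. weakly_represented G (\<lambda>e'. h e' z)}"
    and z: "z \<in> ball 0 1"
  shows "weakly_represented G (\<lambda>e'. h e' z)"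
proof -
  define S where "S = {z \<in> ball 0 1. weakly_represented G (\<lambda>e'. h e' z)}"
  define T where "T = ball 0 1 \<inter> {z. z islimpt S}"
  have "open T"
  proof (rule openI)
    fix w assume "w \<in> T"
    then have w: "w \<in> ball 0 1" "w islimpt S" by (auto simp: T_def)
    obtain \<rho> where \<rho>: "\<rho> > 0" "\<forall>z\<in>ball w \<rho>. weakly_represented G (\<lambda>e'. h e' z)"
      using weakly_represented_near_limpt[OF hol w(1)] w(2) unfolding S_def by blast
    define r where "r = min \<rho> (1 - norm w)"
    have r: "0 < r" using \<rho> w by (simp add: r_def)
    have "ball w r \<subseteq> S"
      using \<rho>(2) ball_subset_ball_iff[of w r 0 1] unfolding S_def r_def by (auto simp: dist_norm)
    have "ball w r \<subseteq> T"
    proof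
      fix y assume y: "y \<in> ball w r"
      then have "y islimpt ball w r" using r by (simp add: islimpt_ball)
      then have "y islimpt S" using \<open>ball w r \<subseteq> S\<close> by (rule islimpt_subset)
      moreover have "y \<in> ball 0 1" using y \<open>ball w r \<subseteq> S\<close> unfolding S_def by blast
      ultimately show "y \<in> T" unfolding T_def by blast
    qed
    then show "\<exists>r>0. ball w r \<subseteq> T" using r by blast
  qed
  then have "openin (top_of_set (ball 0 1)) T"
    by (intro open_subset) (auto simp: T_def)
  moreover have "closedin (top_of_set (ball 0 1)) T"
    unfolding T_def by (rule closedin_closed_Int[OF closed_limpts])
  moreover have "w0 \<in> T" using w0 lim unfolding T_def S_def by blast
  ultimately have "T = ball 0 1"
    using connected_ball[of "0::complex" 1] unfolding connected_clopen by blast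
  then have "z islimpt S" using z unfolding T_def by blast
  then obtain \<rho> where "\<rho> > 0" "\<forall>y\<in>ball z \<rho>. weakly_represented G (\<lambda>e'. h e' y)"
    using weakly_represented_near_limpt[OF hol z] unfolding S_def by blast
  then show ?thesis by simp
qed

end

lemma holomorphic_taylor_remainder_bound:
  assumes hol: "g holomorphic_on S" and "open S" and K: "K \<subseteq> S" "compact K" "convex K"
  shows "\<exists>B\<ge>0. \<forall>a\<in>K. \<forall>b\<in>K. norm (g b - g a - deriv g a * (b - a)) \<le> B * norm (b - a) ^ 2"
proof -
  have hol': "deriv g holomorphic_on S" using hol \<open>open S\<close> by (rule holomorphic_deriv)
  have hol'': "deriv (deriv g) holomorphic_on S" using hol' \<open>open S\<close> by (rule holomorphic_deriv)
  then obtain B where "0 \<le> B" and B: "\<forall>x\<in>K. norm (deriv (deriv g) x) \<le> B"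
    using holomorphic_bounded_on_compact K(1,2) by blast
  define f where "f i = (if i = 0 then g else if i = 1 then deriv g else deriv (deriv g))" for i :: nat
  have "norm (g b - g a - deriv g a * (b - a)) \<le> B * norm (b - a) ^ 2" if "a \<in> K" "b \<in> K" for a b
  proof -
    have "norm (f 0 b - (\<Sum>i\<le>1. f i a * (b - a) ^ i / fact i)) \<le> B * norm (b - a) ^ Suc 1 / fact 1"
    proof (rule complex_Taylor[OF K(3)])
      fix i :: nat and x assume "x \<in> K" "i \<le> 1"
      then have "x \<in> S" "i = 0 \<or> i = 1" using K(1) by auto
      then show "(f i has_field_derivative f (Suc i) x) (at x within K)"
        using holomorphic_derivI[OF hol \<open>open S\<close>] holomorphic_derivI[OF hol' \<open>open S\<close>]
        by (auto simp: f_def)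
    qed (use B that in \<open>auto simp: f_def\<close>)
    then show ?thesis by (simp add: f_def algebra_simps power2_eq_square)
  qed
  then show ?thesis using \<open>0 \<le> B\<close> by (intro exI[of _ B]) auto
qed

lemma riemann_sum_error:
  fixes g g' :: "complex \<Rightarrow> complex"
  assumes taylor: "\<forall>a\<in>K. \<forall>b\<in>K. norm (g b - g a - g' a * (b - a)) \<le> B * norm (b - a) ^ 2"
    and K: "\<forall>j\<le>N. of_nat j * z / of_nat N \<in> K" and N: "0 < N"
  shows "norm (g z - g 0 - (\<Sum>j<N. z / of_nat N * g' (of_nat j * z / of_nat N))) \<le> B * norm z ^ 2 / real N"
proof -
  define t where "t j = of_nat j * z / of_nat N" for j
  have step: "t (Suc j) - t j = z / of_nat N" for j
    by (simp add: t_def diff_divide_distrib[symmetric] algebra_simps)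
  have "g z - g 0 = (\<Sum>j<N. g (t (Suc j)) - g (t j))"
    using sum_lessThan_telescope[of "\<lambda>j. g (t j)" N] N by (simp add: t_def)
  then have "g z - g 0 - (\<Sum>j<N. z / of_nat N * g' (t j))
      = (\<Sum>j<N. g (t (Suc j)) - g (t j) - g' (t j) * (t (Suc j) - t j))"
    by (simp add: step sum_subtractf mult.commute)
  then have "norm (g z - g 0 - (\<Sum>j<N. z / of_nat N * g' (t j)))
      \<le> (\<Sum>j<N. norm (g (t (Suc j)) - g (t j) - g' (t j) * (t (Suc j) - t j)))"
    by (metis norm_sum)
  also have "\<dots> \<le> (\<Sum>j<N. B * norm (z / of_nat N) ^ 2)"
  proof (rule sum_mono)
    fix j assume "j \<in> {..<N}"
    then have "t j \<in> K" "t (Suc j) \<in> K"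
      using K[rule_format, of j] K[rule_format, of "Suc j"] unfolding t_def by (auto simp del: of_nat_Suc)
    then show "norm (g (t (Suc j)) - g (t j) - g' (t j) * (t (Suc j) - t j)) \<le> B * norm (z / of_nat N) ^ 2"
      using taylor step[of j] by metis
  qed
  also have "\<dots> = B * norm z ^ 2 / real N"
    using N by (simp add: norm_divide power2_eq_square field_simps)
  finally show ?thesis by (simp add: t_def)
qed

context locally_complete_dual
begin

lemma weakly_represented_primitive:
  assumes hol: "\<forall>e'\<in>G. g e' holomorphic_on ball 0 1"
    and \<Phi>: "\<forall>z\<in>ball 0 1. \<forall>e'\<in>G. e' (\<Phi> z) = deriv (g e') z"
    and f0: "\<forall>e'\<in>G. e' f0 = g e' 0"
    and z: "z \<in> ball 0 1"
  shows "weakly_represented G (\<lambda>e'. g e' z)"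
proof -
  define K where "K = cball (0::complex) (norm z)"
  have K: "K \<subseteq> ball 0 1" "compact K" "convex K" using z by (auto simp: K_def)
  have grid: "of_nat j * z / of_nat N \<in> K" if "j \<le> N" for j N :: nat
  proof -
    have "norm (of_nat j * z / of_nat N) = real j / real N * norm z" by (simp add: norm_mult norm_divide)
    also have "\<dots> \<le> norm z" using that by (intro mult_left_le_one_le) (auto simp: divide_le_eq_1)
    finally show ?thesis by (simp add: K_def)
  qed
  have "\<forall>e'\<in>G. \<exists>B\<ge>0. \<forall>a\<in>K. \<forall>b\<in>K. norm (g e' b - g e' a - deriv (g e') a * (b - a)) \<le> B * norm (b - a) ^ 2"
    using holomorphic_taylor_remainder_bound[OF _ open_ball K] hol by blast
  from bchoice[OF this] obtain B where B: "\<forall>e'\<in>G. 0 \<le> B e'"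
    and taylor: "\<forall>e'\<in>G. \<forall>a\<in>K. \<forall>b\<in>K. norm (g e' b - g e' a - deriv (g e') a * (b - a)) \<le> B e' * norm (b - a) ^ 2"
    by blast
  \<comment> \<open>Riemann sums for the integral of \<open>\<Phi>\<close> along the segment from \<open>0\<close> to \<open>z\<close>\<close>
  define s where "s n = f0 + (\<Sum>j<Suc n. (z / of_nat (Suc n)) *\<^sub>C \<Phi> (of_nat j * z / of_nat (Suc n)))" for n
  have approx: "norm (g e' z - e' (s n)) \<le> B e' * norm z ^ 2 * inverse (real (Suc n))" if e': "e' \<in> G" for e' n
  proof -
    have grid_ball: "of_nat j * z / of_nat (Suc n) \<in> ball 0 1" if "j < Suc n" for j
      using grid[of j "Suc n"] K(1) that by auto
    have "e' (s n) = e' f0 + (\<Sum>j<Suc n. z / of_nat (Suc n) * e' (\<Phi> (of_nat j * z / of_nat (Suc n))))"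
      unfolding s_def by (simp only: lc_dual_add[OF G_lc_dual[OF e']] lc_dual_sum[OF G_lc_dual[OF e']])
    also have "\<dots> = g e' 0 + (\<Sum>j<Suc n. z / of_nat (Suc n) * deriv (g e') (of_nat j * z / of_nat (Suc n)))"
      using f0 \<Phi> e' grid_ball by (intro arg_cong2[where f = "(+)"] sum.cong) auto
    finally have "g e' z - e' (s n)
        = g e' z - g e' 0 - (\<Sum>j<Suc n. z / of_nat (Suc n) * deriv (g e') (of_nat j * z / of_nat (Suc n)))"
      by (simp add: diff_diff_add)
    moreover have "norm (g e' z - g e' 0 - (\<Sum>j<Suc n. z / of_nat (Suc n) * deriv (g e') (of_nat j * z / of_nat (Suc n))))
        \<le> B e' * norm z ^ 2 / real (Suc n)"
    proof (rule riemann_sum_error)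
      show "\<forall>a\<in>K. \<forall>b\<in>K. norm (g e' b - g e' a - deriv (g e') a * (b - a)) \<le> B e' * norm (b - a) ^ 2"
        using taylor e' by blast
      show "\<forall>j\<le>Suc n. of_nat j * z / of_nat (Suc n) \<in> K" using grid by blast
    qed simp
    ultimately have "norm (g e' z - e' (s n)) \<le> B e' * norm z ^ 2 / real (Suc n)"
      by (simp only:)
    then show ?thesis by (simp add: divide_inverse)
  qed
  show ?thesis
    using B approx LIMSEQ_inverse_real_of_nat
    by (intro weakly_represented_if_approximable[where s = s and K = "\<lambda>e'. B e' * norm z ^ 2"
          and \<delta> = "\<lambda>n. inverse (real (Suc n))"]) auto
qed

end

lemma holomorphic_constant_if_deriv_zero_on_limpt:
  assumes hol: "u holomorphic_on S" and S: "open S" "connected S"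
    and U: "U \<subseteq> S" "\<xi> \<in> S" "\<xi> islimpt U" and zero: "\<forall>z\<in>U. deriv u z = 0"
    and "a \<in> S" "z \<in> S"
  shows "u z = u a"
proof -
  have "deriv u holomorphic_on S" using hol S(1) by (rule holomorphic_deriv)
  then have "deriv u w = 0" if "w \<in> S" for w
    using analytic_continuation[OF _ S U] zero that by blast
  then have "(u has_field_derivative 0) (at w)" if "w \<in> S" for w
    using holomorphic_derivI[OF hol S(1) that] that by simp
  then have "u constant_on S" using S by (intro has_field_derivative_0_imp_constant_on) auto
  then show ?thesis using assms(8,9) unfolding constant_on_def by metis
qed

lemma lc_has_deriv_unique:
  assumes lc: "lcHs p" and d1: "lc_has_deriv p F d1 z" and d2: "lc_has_deriv p F d2 z"
  shows "d1 = d2"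
proof -
  have "p a (d1 - d2) = 0" for a
  proof -
  define q where "q h = inverse h *\<^sub>C (F (z + h) - F z)" for h
  have "((\<lambda>h. p a (q h - d2) + p a (q h - d1)) \<longlongrightarrow> 0 + 0) (at 0)"
    using d1 d2 unfolding lc_has_deriv_def q_def by (intro tendsto_add) auto
  moreover have "p a (d1 - d2) \<le> p a (q h - d2) + p a (q h - d1)" for h
    using lcHs_triangle[OF lc, of a "q h - d2" "- (q h - d1)"] lcHs_minus[OF lc, of a "q h - d1"]
    by (simp add: algebra_simps)
  ultimately have "p a (d1 - d2) \<le> 0"
    by (intro tendsto_le[OF at_neq_bot _ tendsto_const]) auto
  then show "p a (d1 - d2) = 0" using lcHs_nonneg[OF lc, of a "d1 - d2"] by linarith
  qed
  then show ?thesis using lcHs_eq_iff_seminorms_zero[OF lc] by blast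
qed

lemma lc_deriv_eqI: "lcHs p \<Longrightarrow> lc_has_deriv p F d z \<Longrightarrow> lc_deriv p F z = d"
  unfolding lc_deriv_def by (rule the_equality) (auto intro: lc_has_deriv_unique)

lemma lc_has_deriv_lc_deriv:
  assumes "lcHs p" and "lc_holomorphic p F" and "z \<in> ball 0 1"
  shows "lc_has_deriv p F (lc_deriv p F z) z"
proof -
  obtain d where "lc_has_deriv p F d z" using assms(2,3) unfolding lc_holomorphic_def by blast
  with lc_deriv_eqI[OF assms(1) this] show ?thesis by simp
qed

lemma lc_has_deriv_imp_has_field_derivative:
  assumes dual: "e' \<in> lc_dual p" and d: "lc_has_deriv p F d z"
  shows "((\<lambda>z. e' (F z)) has_field_derivative e' d) (at z)"
proof -
  obtain b C where C: "\<forall>x. norm (e' x) \<le> C * p b x" using lc_dual_bound[OF dual] by blast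
  have quotient: "(e' (F (z + h)) - e' (F z)) / h - e' d = e' (inverse h *\<^sub>C (F (z + h) - F z) - d)" for h
    by (simp add: lc_dual_diff[OF dual] lc_dual_scaleC[OF dual] divide_inverse mult.commute)
  have "((\<lambda>h. (e' (F (z + h)) - e' (F z)) / h - e' d) \<longlongrightarrow> 0) (at 0)"
  proof (rule Lim_null_comparison)
    show "\<forall>\<^sub>F h in at 0. norm ((e' (F (z + h)) - e' (F z)) / h - e' d)
        \<le> C * p b (inverse h *\<^sub>C (F (z + h) - F z) - d)"
      unfolding quotient using C by simp
    show "((\<lambda>h. C * p b (inverse h *\<^sub>C (F (z + h) - F z) - d)) \<longlongrightarrow> 0) (at 0)"
      using d unfolding lc_has_deriv_def by (intro tendsto_mult_right_zero) blast
  qed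
  then show ?thesis unfolding DERIV_def by (simp add: LIM_zero_iff)
qed

lemma lc_has_deriv_if_bounded_second_quotients:
  assumes lc: "lcHs p" and r: "0 < r"
    and bounded: "lc_bounded p ((\<lambda>h. inverse h *\<^sub>C (inverse h *\<^sub>C (F (z + h) - F z) - d)) ` {h. h \<noteq> 0 \<and> norm h < r})"
  shows "lc_has_deriv p F d z"
  unfolding lc_has_deriv_def
proof
  fix a
  obtain C where C: "\<forall>h. h \<noteq> 0 \<and> norm h < r \<longrightarrow> p a (inverse h *\<^sub>C (inverse h *\<^sub>C (F (z + h) - F z) - d)) \<le> C"
    using bounded unfolding lc_bounded_def by blast
  have "\<forall>\<^sub>F h in at 0. h \<noteq> 0 \<and> norm h < r"
    unfolding eventually_at using r by (intro exI[of _ r]) (auto simp: dist_norm)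
  then have upper: "\<forall>\<^sub>F h in at 0. p a (inverse h *\<^sub>C (F (z + h) - F z) - d) \<le> norm h * C"
  proof (rule eventually_mono)
    fix h :: complex assume "h \<noteq> 0 \<and> norm h < r"
    then have h: "h \<noteq> 0" "norm h < r" by auto
    have "inverse h *\<^sub>C (F (z + h) - F z) - d = h *\<^sub>C (inverse h *\<^sub>C (inverse h *\<^sub>C (F (z + h) - F z) - d))"
      by (rule scaleC_inverse_cancel[OF h(1), symmetric])
    then have "p a (inverse h *\<^sub>C (F (z + h) - F z) - d)
        = norm h * p a (inverse h *\<^sub>C (inverse h *\<^sub>C (F (z + h) - F z) - d))"
      by (simp only: lcHs_scaleC[OF lc, symmetric])
    also have "\<dots> \<le> norm h * C" using C h by (intro mult_left_mono) auto
    finally show "p a (inverse h *\<^sub>C (F (z + h) - F z) - d) \<le> norm h * C" .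
  qed
  have lower: "\<forall>\<^sub>F h in at 0. 0 \<le> p a (inverse h *\<^sub>C (F (z + h) - F z) - d)"
    by (simp add: lcHs_nonneg[OF lc])
  have "((\<lambda>h. norm h * C) \<longlongrightarrow> 0) (at (0::complex))"
    by (intro tendsto_mult_left_zero tendsto_norm_zero tendsto_ident_at)
  from tendsto_sandwich[OF lower upper tendsto_const this]
  show "((\<lambda>h. p a (inverse h *\<^sub>C (F (z + h) - F z) - d)) \<longlongrightarrow> 0) (at 0)" .
qed

context bounded_determining_dual
begin

lemma lc_has_deriv_if_weakly_holomorphic:
  assumes hol: "\<forall>e'\<in>G. g e' holomorphic_on ball 0 1"
    and F: "\<forall>z\<in>ball 0 1. \<forall>e'\<in>G. e' (F z) = g e' z"
    and \<Phi>: "\<forall>z\<in>ball 0 1. \<forall>e'\<in>G. e' (\<Phi> z) = deriv (g e') z"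
    and z: "z \<in> ball 0 1"
  shows "lc_has_deriv p F (\<Phi> z) z"
proof -
  define r where "r = (1 - norm z) / 2"
  have r: "0 < r" using z by (simp add: r_def)
  have K: "cball z r \<subseteq> ball 0 1" using z by (simp add: cball_subset_ball_iff r_def field_simps)
  have "\<forall>e'\<in>G. \<exists>B\<ge>0. \<forall>a\<in>cball z r. \<forall>b\<in>cball z r.
      norm (g e' b - g e' a - deriv (g e') a * (b - a)) \<le> B * norm (b - a) ^ 2"
    using holomorphic_taylor_remainder_bound[OF _ open_ball K compact_cball convex_cball] hol by blast
  from bchoice[OF this] obtain B where taylor: "\<forall>e'\<in>G. \<forall>a\<in>cball z r. \<forall>b\<in>cball z r.
      norm (g e' b - g e' a - deriv (g e') a * (b - a)) \<le> B e' * norm (b - a) ^ 2"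
    by blast
  show ?thesis
  proof (rule lc_has_deriv_if_bounded_second_quotients[OF lcHs r], rule lc_bounded_if_weakly_bounded)
    fix e' assume e': "e' \<in> G"
    have "norm (e' (inverse h *\<^sub>C (inverse h *\<^sub>C (F (z + h) - F z) - \<Phi> z))) \<le> B e'"
      if h: "h \<noteq> 0" "norm h < r" for h
    proof -
      have zh: "z \<in> cball z r" "z + h \<in> cball z r" using r h(2) by (simp_all add: dist_norm)
      then have "z + h \<in> ball 0 1" using K by blast
      then have "e' (F (z + h)) = g e' (z + h)" "e' (F z) = g e' z" "e' (\<Phi> z) = deriv (g e') z"
        using F \<Phi> e' z by blast+
      then have "e' (inverse h *\<^sub>C (inverse h *\<^sub>C (F (z + h) - F z) - \<Phi> z))
          = inverse h * (inverse h * (g e' (z + h) - g e' z) - deriv (g e') z)"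
        by (simp add: lc_dual_scaleC[OF G_lc_dual[OF e']] lc_dual_diff[OF G_lc_dual[OF e']])
      also have "\<dots> = (g e' (z + h) - g e' z - deriv (g e') z * ((z + h) - z)) / h ^ 2"
        using h(1) by (simp add: field_simps power2_eq_square)
      finally have "norm (e' (inverse h *\<^sub>C (inverse h *\<^sub>C (F (z + h) - F z) - \<Phi> z)))
          = norm (g e' (z + h) - g e' z - deriv (g e') z * ((z + h) - z)) / norm h ^ 2"
        by (simp add: norm_divide norm_power)
      also have "\<dots> \<le> B e' * norm ((z + h) - z) ^ 2 / norm h ^ 2"
        by (rule divide_right_mono[OF taylor[rule_format, OF e' zh]]) simp
      finally show ?thesis using h(1) by simp
    qed
    then show "\<exists>C. \<forall>x\<in>(\<lambda>h. inverse h *\<^sub>C (inverse h *\<^sub>C (F (z + h) - F z) - \<Phi> z)) `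
        {h. h \<noteq> 0 \<and> norm h < r}. norm (e' x) \<le> C"
      by (intro exI[of _ "B e'"]) auto
  qed
qed

lemma lc_bloch_if_weakly_bloch:
  assumes \<nu>_pos: "\<forall>z\<in>ball 0 1. 0 < \<nu> z"
    and deriv: "\<forall>z\<in>ball 0 1. lc_has_deriv p F (\<Phi> z) z"
    and \<Phi>: "\<forall>z\<in>ball 0 1. \<forall>e'\<in>G. e' (\<Phi> z) = deriv (g e') z"
    and bloch: "\<forall>e'\<in>G. scalar_bloch \<nu> (g e')"
  shows "lc_bloch p \<nu> F"
  unfolding lc_bloch_def
proof (intro conjI allI)
  show "lc_holomorphic p F" using deriv unfolding lc_holomorphic_def by blast
  fix a
  define V where "V = (\<lambda>z. complex_of_real (\<nu> z) *\<^sub>C \<Phi> z) ` ball 0 1"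
  have "lc_bounded p V"
  proof (rule lc_bounded_if_weakly_bounded)
    fix e' assume e': "e' \<in> G"
    obtain C where C: "\<forall>z\<in>ball 0 1. norm (deriv (g e') z) * \<nu> z \<le> C"
      using bloch e' unfolding scalar_bloch_def by blast
    have "norm (e' (complex_of_real (\<nu> z) *\<^sub>C \<Phi> z)) = norm (deriv (g e') z) * \<nu> z"
      if "z \<in> ball 0 1" for z
      using \<Phi> \<nu>_pos e' that by (simp add: lc_dual_scaleC[OF G_lc_dual[OF e']] norm_mult abs_of_pos)
    then show "\<exists>C. \<forall>x\<in>V. norm (e' x) \<le> C"
      using C unfolding V_def by (intro exI[of _ C]) auto
  qed
  then obtain C where C: "\<forall>x\<in>V. p a x \<le> C" unfolding lc_bounded_def by blast
  have "p a (lc_deriv p F z) * \<nu> z \<le> C" if z: "z \<in> ball 0 1" for z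
  proof -
    have "lc_deriv p F z = \<Phi> z" using lc_deriv_eqI[OF lcHs] deriv z by blast
    moreover have "0 < \<nu> z" using \<nu>_pos z by blast
    ultimately have "p a (lc_deriv p F z) * \<nu> z = p a (complex_of_real (\<nu> z) *\<^sub>C \<Phi> z)"
      by (simp add: lcHs_scaleC[OF lcHs] mult.commute abs_of_pos)
    also have "\<dots> \<le> C" using C z unfolding V_def by blast
    finally show ?thesis .
  qed
  then show "\<exists>C. p a (F 0) \<le> C \<and> (\<forall>z\<in>ball 0 1. p a (lc_deriv p F z) * \<nu> z \<le> C)"
    by (intro exI[of _ "max (p a (F 0)) C"]) (auto simp: le_max_iff_disj)
qed

lemma lc_holomorphic_eqI:
  assumes F: "lc_holomorphic p F" and H: "lc_holomorphic p H" and "F 0 = H 0"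
    and U: "U \<subseteq> ball 0 1" "w0 \<in> ball 0 1" "w0 islimpt U"
    and eq: "\<forall>z\<in>U. lc_deriv p F z = lc_deriv p H z"
    and z: "z \<in> ball 0 1"
  shows "F z = H z"
proof (rule eq_if_weakly_eq, intro ballI)
  fix e' assume e': "e' \<in> G"
  define u where "u y = e' (F y) - e' (H y)" for y
  have du: "(u has_field_derivative e' (lc_deriv p F y) - e' (lc_deriv p H y)) (at y)"
    if "y \<in> ball 0 1" for y
  proof -
    have "lc_has_deriv p F (lc_deriv p F y) y" "lc_has_deriv p H (lc_deriv p H y) y"
      using lc_has_deriv_lc_deriv[OF lcHs _ that] F H by blast+
    then show ?thesis
      unfolding u_def by (intro DERIV_diff lc_has_deriv_imp_has_field_derivative[OF G_lc_dual[OF e']])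
  qed
  then have "u holomorphic_on ball 0 1"
    unfolding holomorphic_on_def field_differentiable_def using has_field_derivative_at_within by blast
  moreover have "\<forall>y\<in>U. deriv u y = 0"
    using DERIV_imp_deriv[OF du] eq U(1) by auto
  ultimately have "u z = u 0"
    using z by (intro holomorphic_constant_if_deriv_zero_on_limpt[OF _ open_ball connected_ball U]) auto
  then show "e' (F z) = e' (H z)" using \<open>F 0 = H 0\<close> by (simp add: u_def)
qed

end

context locally_complete_dual
begin

lemma bloch_extension_exists:
  assumes \<nu>_pos: "\<forall>z\<in>ball 0 1. 0 < \<nu> z"
    and U: "U \<subseteq> ball 0 1" "w0 \<in> ball 0 1" "w0 islimpt U"
    and hyp: "\<forall>e'\<in>G. \<exists>g. scalar_bloch \<nu> g \<and> g 0 = e' f0 \<and> (\<forall>z\<in>U. deriv g z = e' (f1 z))"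
  shows "\<exists>F. lc_bloch p \<nu> F \<and> F 0 = f0 \<and> (\<forall>z\<in>U. lc_deriv p F z = f1 z)"
proof -
  obtain g where g: "\<forall>e'\<in>G. scalar_bloch \<nu> (g e')" "\<forall>e'\<in>G. g e' 0 = e' f0"
    "\<forall>e'\<in>G. \<forall>z\<in>U. deriv (g e') z = e' (f1 z)"
    using bchoice[OF hyp] by blast
  have hol: "\<forall>e'\<in>G. g e' holomorphic_on ball 0 1" using g(1) by (simp add: scalar_bloch_def)
  then have hol': "\<forall>e'\<in>G. deriv (g e') holomorphic_on ball 0 1" by (simp add: holomorphic_deriv)
  have "U \<subseteq> {z \<in> ball 0 1. weakly_represented G (\<lambda>e'. deriv (g e') z)}"
    using U(1) g(3) unfolding weakly_represented_def by fastforce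
  then have "w0 islimpt {z \<in> ball 0 1. weakly_represented G (\<lambda>e'. deriv (g e') z)}"
    by (rule islimpt_subset[OF U(3)])
  then have "\<forall>z\<in>ball 0 1. weakly_represented G (\<lambda>e'. deriv (g e') z)"
    using weakly_represented_on_ball[OF hol' U(2)] by blast
  from weakly_represented_choice[OF this]
  obtain \<Phi> where \<Phi>: "\<forall>z\<in>ball 0 1. \<forall>e'\<in>G. e' (\<Phi> z) = deriv (g e') z"
    by blast
  have "\<forall>e'\<in>G. e' f0 = g e' 0" using g(2) by simp
  then have "\<forall>z\<in>ball 0 1. weakly_represented G (\<lambda>e'. g e' z)"
    using weakly_represented_primitive[OF hol \<Phi>] by blast
  from weakly_represented_choice[OF this]
  obtain F where F: "\<forall>z\<in>ball 0 1. \<forall>e'\<in>G. e' (F z) = g e' z"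
    by blast
  have deriv: "\<forall>z\<in>ball 0 1. lc_has_deriv p F (\<Phi> z) z"
    using lc_has_deriv_if_weakly_holomorphic[OF hol F \<Phi>] by blast
  have "F 0 = f0" using F g(2) by (intro eq_if_weakly_eq) simp
  moreover have "lc_deriv p F z = f1 z" if "z \<in> U" for z
  proof -
    have "\<Phi> z = f1 z"
    proof (rule eq_if_weakly_eq, intro ballI)
      fix e' assume e': "e' \<in> G"
      have "e' (\<Phi> z) = deriv (g e') z" using \<Phi> U(1) that e' by blast
      also have "\<dots> = e' (f1 z)" using g(3) that e' by blast
      finally show "e' (\<Phi> z) = e' (f1 z)" .
    qed
    moreover have "lc_has_deriv p F (\<Phi> z) z" using deriv U(1) that by blast
    ultimately show ?thesis using lc_deriv_eqI[OF lcHs] by simp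
  qed
  moreover have "lc_bloch p \<nu> F" using \<nu>_pos deriv \<Phi> g(1) by (rule lc_bloch_if_weakly_bloch)
  ultimately show ?thesis by blast
qed

end

theorem mainTheorem6:
  fixes p :: "'i \<Rightarrow> 'e::cvec \<Rightarrow> real"
    and G :: "('e \<Rightarrow> complex) set"
    and \<nu> :: "complex \<Rightarrow> real"
    and U :: "complex set"
    and f0 :: 'e
    and f1 :: "complex \<Rightarrow> 'e"
  assumes lc: "lcHs p"
    and loc_compl: "locally_complete p"
    and G_sub: "G \<subseteq> lc_dual p"
    and G_lin: "linear_subspace_fun G"
    and G_det: "determines_boundedness p G"
    and \<nu>_cont: "continuous_on (ball 0 1) \<nu>"
    and \<nu>_pos: "\<forall>z\<in>ball 0 1. 0 < \<nu> z"
    and U_sub: "U \<subseteq> ball 0 1"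
    and U_acc: "\<exists>z\<in>ball 0 1. z islimpt U"
    and hyp: "\<forall>e'\<in>G. \<exists>g. scalar_bloch \<nu> g \<and> g 0 = e' f0 \<and> (\<forall>z\<in>U. deriv g z = e' (f1 z))"
  shows "(\<exists>F. lc_bloch p \<nu> F \<and> F 0 = f0 \<and> (\<forall>z\<in>U. lc_deriv p F z = f1 z)) \<and>
         (\<forall>F H. lc_bloch p \<nu> F \<and> F 0 = f0 \<and> (\<forall>z\<in>U. lc_deriv p F z = f1 z) \<and>
                lc_bloch p \<nu> H \<and> H 0 = f0 \<and> (\<forall>z\<in>U. lc_deriv p H z = f1 z)
                \<longrightarrow> (\<forall>z\<in>ball 0 1. F z = H z))"
proof -
  interpret locally_complete_dual p G
    using lc G_sub G_det loc_compl by unfold_locales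
  obtain w0 where w0: "w0 \<in> ball 0 1" "w0 islimpt U" using U_acc by blast
  show ?thesis
  proof (intro conjI allI impI ballI)
    show "\<exists>F. lc_bloch p \<nu> F \<and> F 0 = f0 \<and> (\<forall>z\<in>U. lc_deriv p F z = f1 z)"
      using bloch_extension_exists[OF \<nu>_pos U_sub w0 hyp] .
    fix F H and z :: complex
    assume FH: "lc_bloch p \<nu> F \<and> F 0 = f0 \<and> (\<forall>z\<in>U. lc_deriv p F z = f1 z) \<and>
      lc_bloch p \<nu> H \<and> H 0 = f0 \<and> (\<forall>z\<in>U. lc_deriv p H z = f1 z)" and z: "z \<in> ball 0 1"
    show "F z = H z"
    proof (rule lc_holomorphic_eqI[OF _ _ _ U_sub w0 _ z])
      show "lc_holomorphic p F" "lc_holomorphic p H" using FH unfolding lc_bloch_def by blast+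
    qed (use FH in simp_all)
  qed
qed

end
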